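(* Let $G=(V,E)$ be a finite directed acyclic graph with nonnegative edge costs $c(u,v)$, a start node $s$ and a target node $t$, where $t$ is the unique node with no outgoing edges. Let $b>1$. Then for the sophisticated agent with present-bias parameter $b$ (with ties in its choices broken arbitrarily), $C_s(s)\le b\cdot C_o(s)$; that is, the cost ratio $C_s(s)/C_o(s)$ is at most $b$.
   Context: $C_o(u)$ denotes the minimum total cost of a directed path from $u$ to $t$. The sophisticated agent with present-bias parameter $b$ is defined recursively over a reverse topological order: $C_s(t)=0$, and for $u\neq t$, $S_s(u)\in\arg\min_{v:(u,v)\in E}\big(b\cdot c(u,v)+C_s(v)\big)$ and $C_s(u)=c(u,S_s(u))+C_s(S_s(u))$. Starting at $s$ the agent follows $s, S_s(s), S_s(S_s(s)),\dots$ until it reaches $t$, incurring total cost $C_s(s)$. The cost ratio is $C_s(s)/C_o(s)$. *)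

theory Defs
  imports Complex_Main
begin

definition is_dpath :: "('a \<times> 'a) set \<Rightarrow> 'a list \<Rightarrow> bool" where
  "is_dpath E xs \<longleftrightarrow> xs \<noteq> [] \<and> (\<forall>i. Suc i < length xs \<longrightarrow> (xs ! i, xs ! Suc i) \<in> E)"

definition path_cost :: "('a \<Rightarrow> 'a \<Rightarrow> real) \<Rightarrow> 'a list \<Rightarrow> real" where
  "path_cost c xs = (\<Sum>i<length xs - 1. c (xs ! i) (xs ! Suc i))"

definition opt_cost :: "('a \<times> 'a) set \<Rightarrow> ('a \<Rightarrow> 'a \<Rightarrow> real) \<Rightarrow> 'a \<Rightarrow> 'a \<Rightarrow> real" where
  "opt_cost E c t u = Min {path_cost c xs | xs. is_dpath E xs \<and> hd xs = u \<and> last xs = t}"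

text \<open>Over a DAG these equations
  are exactly the recursion over a reverse topological order.\<close>
definition sophisticated ::
  "'a set \<Rightarrow> ('a \<times> 'a) set \<Rightarrow> ('a \<Rightarrow> 'a \<Rightarrow> real) \<Rightarrow> real \<Rightarrow> 'a \<Rightarrow> ('a \<Rightarrow> 'a) \<Rightarrow> ('a \<Rightarrow> real) \<Rightarrow> bool"
where
  "sophisticated V E c b t S Cs \<longleftrightarrow>
     Cs t = 0 \<and>
     (\<forall>u\<in>V. u \<noteq> t \<longrightarrow>
        (u, S u) \<in> E \<and>
        (\<forall>v. (u, v) \<in> E \<longrightarrow> b * c u (S u) + Cs (S u) \<le> b * c u v + Cs v) \<and>
        Cs u = c u (S u) + Cs (S u))"

end

theory Submission
  imports Defs
begin

text \<open>For every edge (u, v) with u \<noteq> t we have Cs u \<le> b c(u, v) + Cs v: the agent actually pays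
  c(u, S u) \<le> b c(u, S u), and S u minimises b c(u, \<cdot>) + Cs. Summing this inequality along an
  optimal path from s to t gives Cs s \<le> b C_o(s).\<close>

lemma path_cost_Cons_Cons: "path_cost c (x # y # zs) = c x y + path_cost c (y # zs)"
  unfolding path_cost_def by (simp add: sum.lessThan_Suc_shift del: sum.lessThan_Suc)

lemma is_dpath_Cons_Cons: "is_dpath E (x # y # zs) \<longleftrightarrow> (x, y) \<in> E \<and> is_dpath E (y # zs)"
  unfolding is_dpath_def by (auto simp: nth_Cons split: nat.splits)

lemma is_dpath_trancl:
  assumes "is_dpath E xs" "i < j" "j < length xs"
  shows "(xs ! i, xs ! j) \<in> E\<^sup>+"
  using assms(2,3)
proof (induction j)
  case (Suc j)
  have "(xs ! j, xs ! Suc j) \<in> E"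
    using assms(1) Suc.prems unfolding is_dpath_def by auto
  with Suc show ?case
    by (cases "i = j") (auto intro: trancl_into_trancl)
qed simp

lemma distinct_if_is_dpath_acyclic:
  assumes "is_dpath E xs" "acyclic E"
  shows "distinct xs"
proof -
  have "xs ! i \<noteq> xs ! j" if "i < j" "j < length xs" for i j
    using is_dpath_trancl[OF assms(1) that] assms(2) unfolding acyclic_def by auto
  then show ?thesis
    by (metis distinct_conv_nth nat_neq_iff)
qed

lemma set_dpath_subset:
  assumes "is_dpath E xs" "E \<subseteq> V \<times> V" "hd xs \<in> V"
  shows "set xs \<subseteq> V"
proof
  fix x assume "x \<in> set xs"
  then obtain i where i: "i < length xs" "x = xs ! i"
    by (auto simp: in_set_conv_nth)
  show "x \<in> V"
  proof (cases i)
    case 0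
    then show ?thesis using assms i by (simp add: hd_conv_nth is_dpath_def)
  next
    case (Suc k)
    then have "(xs ! k, xs ! i) \<in> E" using assms(1) i unfolding is_dpath_def by auto
    then show ?thesis using assms(2) i by auto
  qed
qed

lemma finite_dpaths:
  assumes "finite V" "E \<subseteq> V \<times> V" "acyclic E"
  shows "finite {xs. is_dpath E xs \<and> hd xs \<in> V}"
proof (rule finite_subset[OF _ finite_lists_length_le[OF assms(1)]])
  show "{xs. is_dpath E xs \<and> hd xs \<in> V} \<subseteq> {xs. set xs \<subseteq> V \<and> length xs \<le> card V}"
  proof clarify
    fix xs assume "is_dpath E xs" "hd xs \<in> V"
    then have "set xs \<subseteq> V" "distinct xs"
      using set_dpath_subset distinct_if_is_dpath_acyclic assms(2,3) by blast+
    then show "set xs \<subseteq> V \<and> length xs \<le> card V"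
      using card_mono[OF assms(1), of "set xs"] by (simp add: distinct_card)
  qed
qed

lemma dpath_to_unique_sink_exists:
  assumes "finite V" "E \<subseteq> V \<times> V" "acyclic E"
    and sink: "\<forall>u\<in>V. (\<not> (\<exists>v. (u, v) \<in> E)) \<longleftrightarrow> u = t"
    and "u \<in> V"
  shows "\<exists>xs. is_dpath E xs \<and> hd xs = u \<and> last xs = t"
proof -
  have "finite E"
    using assms(1,2) finite_subset by blast
  then have "wf (E\<inverse>)"
    using finite_acyclic_wf_converse assms(3) by blast
  then show ?thesis
    using \<open>u \<in> V\<close>
  proof (induction u rule: wf_induct_rule)
    case (less u)
    show ?case
    proof (cases "u = t")
      case True
      then show ?thesis by (intro exI[of _ "[t]"]) (simp add: is_dpath_def)
    next
      case False
      then obtain v where v: "(u, v) \<in> E" using sink less.prems by auto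
      with assms(2) less.IH obtain xs where xs: "is_dpath E xs" "hd xs = v" "last xs = t"
        by blast
      then obtain ys where "xs = v # ys" by (cases xs) (auto simp: is_dpath_def)
      with xs v show ?thesis
        by (intro exI[of _ "u # xs"]) (simp add: is_dpath_Cons_Cons)
    qed
  qed
qed

lemma opt_cost_attained:
  assumes "finite V" "E \<subseteq> V \<times> V" "acyclic E"
    and "\<forall>u\<in>V. (\<not> (\<exists>v. (u, v) \<in> E)) \<longleftrightarrow> u = t"
    and "s \<in> V"
  obtains xs where "is_dpath E xs" "hd xs = s" "last xs = t" "opt_cost E c t s = path_cost c xs"
proof -
  let ?P = "{xs. is_dpath E xs \<and> hd xs = s \<and> last xs = t}"
  have "?P \<subseteq> {xs. is_dpath E xs \<and> hd xs \<in> V}"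
    using assms(5) by blast
  then have "finite ?P"
    using finite_dpaths[OF assms(1-3)] by (rule finite_subset)
  moreover have "?P \<noteq> {}"
    using dpath_to_unique_sink_exists[OF assms] by auto
  ultimately have "Min (path_cost c ` ?P) \<in> path_cost c ` ?P"
    by simp
  moreover have "opt_cost E c t s = Min (path_cost c ` ?P)"
    unfolding opt_cost_def by (intro arg_cong[where f = Min]) auto
  ultimately show ?thesis using that by auto
qed

lemma sophisticated_cost_le_step:
  assumes "sophisticated V E c b t S Cs" "\<forall>(u, v)\<in>E. 0 \<le> c u v" "b \<ge> 1"
    and "u \<in> V" "u \<noteq> t" "(u, v) \<in> E"
  shows "Cs u \<le> b * c u v + Cs v"
proof -
  from assms(1,4,5) have choice: "(u, S u) \<in> E" "Cs u = c u (S u) + Cs (S u)"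
    and minimal: "b * c u (S u) + Cs (S u) \<le> b * c u v + Cs v"
    using assms(6) unfolding sophisticated_def by auto
  have "0 \<le> c u (S u)" using assms(2) choice(1) by auto
  then have "c u (S u) \<le> b * c u (S u)"
    using mult_right_mono[OF assms(3)] by simp
  with choice(2) minimal show ?thesis by linarith
qed

lemma sophisticated_cost_le_path_cost:
  assumes "sophisticated V E c b t S Cs" "\<forall>(u, v)\<in>E. 0 \<le> c u v" "b \<ge> 1"
    and "E \<subseteq> V \<times> V" "\<forall>u\<in>V. (\<not> (\<exists>v. (u, v) \<in> E)) \<longleftrightarrow> u = t"
  shows "\<lbrakk>is_dpath E xs; hd xs \<in> V; last xs = t\<rbrakk> \<Longrightarrow> Cs (hd xs) \<le> b * path_cost c xs"
proof (induction xs rule: induct_list012)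
  case 1
  then show ?case by (simp add: is_dpath_def)
next
  case (2 x)
  then show ?case using assms(1) by (simp add: sophisticated_def path_cost_def)
next
  case (3 x y zs)
  then have xy: "(x, y) \<in> E" and "is_dpath E (y # zs)" "x \<in> V"
    by (simp_all add: is_dpath_Cons_Cons)
  moreover have "y \<in> V" using xy assms(4) by auto
  ultimately have IH: "Cs y \<le> b * path_cost c (y # zs)" using "3.IH"(2) "3.prems"(3) by simp
  have "x \<noteq> t" using assms(5) \<open>x \<in> V\<close> xy by auto
  then have "Cs x \<le> b * c x y + Cs y"
    using sophisticated_cost_le_step[OF assms(1-3) \<open>x \<in> V\<close> _ xy] by simp
  with IH show ?case by (simp add: path_cost_Cons_Cons distrib_left)
qed

theorem theorem1:
  fixes V :: "'a set" and E :: "('a \<times> 'a) set" and c :: "'a \<Rightarrow> 'a \<Rightarrow> real"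
    and s t :: 'a and b :: real and S :: "'a \<Rightarrow> 'a" and Cs :: "'a \<Rightarrow> real"
  assumes "finite V"
    and "E \<subseteq> V \<times> V"
    and "acyclic E"
    and "\<forall>(u, v)\<in>E. 0 \<le> c u v"
    and "s \<in> V" and "t \<in> V"
    and "\<forall>u\<in>V. (\<not> (\<exists>v. (u, v) \<in> E)) \<longleftrightarrow> u = t"
    and "b > 1"
    and "sophisticated V E c b t S Cs"
  shows "Cs s \<le> b * opt_cost E c t s"
proof -
  obtain xs where xs: "is_dpath E xs" "hd xs = s" "last xs = t"
    and opt: "opt_cost E c t s = path_cost c xs"
    using opt_cost_attained[OF assms(1-3,7,5)] .
  have "Cs s \<le> b * path_cost c xs"
    using sophisticated_cost_le_path_cost[OF assms(9,4) _ assms(2,7) xs(1)] xs(2,3) assms(5,8)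
    by simp
  with opt show ?thesis by simp
qed

end
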